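(* For every $n\in\mathbb{N}$ there exists a strongly well-connected $3n$-regular oriented graph on $18n+5$ vertices with no Hamilton cycle.
   Context: An oriented graph has at most one edge between any two vertices; $d$-regular means every vertex has in- and outdegree exactly $d$. A digraph $G$ on at least four vertices is strongly well-connected if for every partition $(A,B)$ of $V(G)$ with $|A|,|B|\geq 2$ there exist two edges $ab$ and $cd$ with no common vertex such that $a,d\in A$ and $b,c\in B$. A Hamilton cycle is a directed cycle through all vertices. *)

theory Defs
  imports Main
begin

definition digraph :: "'a set \<Rightarrow> ('a \<times> 'a) set \<Rightarrow> bool" where
  "digraph V E \<longleftrightarrow> finite V \<and> E \<subseteq> V \<times> V"

definition oriented :: "'a set \<Rightarrow> ('a \<times> 'a) set \<Rightarrow> bool" where
  "oriented V E \<longleftrightarrow> digraph V E \<and> (\<forall>x. (x, x) \<notin> E) \<and> (\<forall>x y. (x, y) \<in> E \<longrightarrow> (y, x) \<notin> E)"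

definition outdeg :: "('a \<times> 'a) set \<Rightarrow> 'a \<Rightarrow> nat" where
  "outdeg E v = card {w. (v, w) \<in> E}"

definition indeg :: "('a \<times> 'a) set \<Rightarrow> 'a \<Rightarrow> nat" where
  "indeg E v = card {u. (u, v) \<in> E}"

definition regular :: "nat \<Rightarrow> 'a set \<Rightarrow> ('a \<times> 'a) set \<Rightarrow> bool" where
  "regular d V E \<longleftrightarrow> (\<forall>v\<in>V. indeg E v = d \<and> outdeg E v = d)"

definition strongly_well_connected :: "'a set \<Rightarrow> ('a \<times> 'a) set \<Rightarrow> bool" where
  "strongly_well_connected V E \<longleftrightarrow> card V \<ge> 4 \<and>
     (\<forall>A B. A \<union> B = V \<and> A \<inter> B = {} \<and> card A \<ge> 2 \<and> card B \<ge> 2 \<longrightarrow>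
        (\<exists>a b c d. (a, b) \<in> E \<and> (c, d) \<in> E \<and> a \<in> A \<and> d \<in> A \<and> b \<in> B \<and> c \<in> B
                   \<and> a \<noteq> c \<and> a \<noteq> d \<and> b \<noteq> c \<and> b \<noteq> d))"

definition hamilton_cycle :: "'a set \<Rightarrow> ('a \<times> 'a) set \<Rightarrow> 'a list \<Rightarrow> bool" where
  "hamilton_cycle V E vs \<longleftrightarrow> distinct vs \<and> set vs = V \<and> length vs \<ge> 2 \<and>
     (\<forall>i < length vs. (vs ! i, vs ! ((i + 1) mod length vs)) \<in> E)"

definition hamiltonian :: "'a set \<Rightarrow> ('a \<times> 'a) set \<Rightarrow> bool" where
  "hamiltonian V E \<longleftrightarrow> (\<exists>vs. hamilton_cycle V E vs)"

end

theory Submission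
  imports Defs "HOL-Library.Nat_Bijection"
begin

text \<open>The graph consists of three copies of the rotational tournament on \<open>6n+1\<close> vertices, each
  missing a matching of \<open>2n\<close> edges, and two hubs that make up for the missing degrees. Every edge
  entering a copy starts at a hub, so a Hamilton cycle would have to enter three copies from two
  vertices. For strong well-connectedness, a partition that splits a copy cuts at least five edges
  inside it, and by regularity equally many leave and enter each side; two disjoint cut edges of
  opposite directions exist because the cut edges do not all pass through a single vertex. If no
  copy is split, edges at the hubs supply the two disjoint cut edges directly.\<close>

definition crossing_pair :: "('a \<times> 'a) set \<Rightarrow> 'a set \<Rightarrow> 'a set \<Rightarrow> bool" where
  "crossing_pair E A B \<longleftrightarrow> (\<exists>a b c d. (a, b) \<in> E \<and> (c, d) \<in> E \<and> a \<in> A \<and> d \<in> A \<and> b \<in> B \<and> c \<in> B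
     \<and> a \<noteq> c \<and> a \<noteq> d \<and> b \<noteq> c \<and> b \<noteq> d)"

lemma strongly_well_connected_iff:
  "strongly_well_connected V E \<longleftrightarrow> 4 \<le> card V \<and>
     (\<forall>A B. A \<union> B = V \<and> A \<inter> B = {} \<and> 2 \<le> card A \<and> 2 \<le> card B \<longrightarrow> crossing_pair E A B)"
  unfolding strongly_well_connected_def crossing_pair_def ..

lemma crossing_pair_sym: "crossing_pair E A B \<Longrightarrow> crossing_pair E B A"
  unfolding crossing_pair_def by blast

lemma crossing_pairI:
  assumes "(a, b) \<in> E" "(c, d) \<in> E" "a \<in> A" "d \<in> A" "b \<in> B" "c \<in> B" "A \<inter> B = {}"
    and "a \<noteq> d" "b \<noteq> c"
  shows "crossing_pair E A B"
  unfolding crossing_pair_def using assms by blast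

lemma crossing_pair_image:
  assumes "inj f" "crossing_pair E A B"
  shows "crossing_pair (map_prod f f ` E) (f ` A) (f ` B)"
  using assms unfolding crossing_pair_def inj_def by (metis image_eqI map_prod_simp)

lemma map_prod_mem_iff: "inj f \<Longrightarrow> (f x, f y) \<in> map_prod f f ` E \<longleftrightarrow> (x, y) \<in> E"
  using inj_image_mem_iff[OF prod.inj_map, of f f "(x, y)"] by simp

lemma oriented_relabel:
  assumes "inj f" "oriented V E"
  shows "oriented (f ` V) (map_prod f f ` E)"
  using assms unfolding oriented_def digraph_def by (auto simp: inj_eq)

lemma regular_relabel:
  assumes "inj f" "regular d V E"
  shows "regular d (f ` V) (map_prod f f ` E)"
proof -
  have "{w. (f v, w) \<in> map_prod f f ` E} = f ` {w. (v, w) \<in> E}"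
   and "{w. (w, f v) \<in> map_prod f f ` E} = f ` {w. (w, v) \<in> E}" for v
    using assms(1) by (auto simp: inj_eq)
  then show ?thesis
    using assms unfolding regular_def outdeg_def indeg_def
    by (simp add: card_image inj_on_subset)
qed

lemma strongly_well_connected_relabel:
  assumes f: "inj f" and swc: "strongly_well_connected V E"
  shows "strongly_well_connected (f ` V) (map_prod f f ` E)"
  unfolding strongly_well_connected_iff
proof (intro conjI allI impI)
  show "4 \<le> card (f ` V)"
    using swc f by (simp add: strongly_well_connected_def card_image inj_on_subset)
  fix A B assume part: "A \<union> B = f ` V \<and> A \<inter> B = {} \<and> 2 \<le> card A \<and> 2 \<le> card B"
  let ?A = "V \<inter> f -` A" and ?B = "V \<inter> f -` B"
  have pre: "f ` (V \<inter> f -` X) = X" if "X \<subseteq> f ` V" for X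
    using that by blast
  have image: "f ` ?A = A" "f ` ?B = B"
    using pre part by (metis Un_upper1 Un_upper2)+
  have "card ?A = card A" "card ?B = card B"
    using card_image[OF inj_on_subset[OF f subset_UNIV]] image by metis+
  moreover have "?A \<union> ?B = V" "?A \<inter> ?B = {}"
    using part by auto
  moreover have "\<And>A' B'. A' \<union> B' = V \<Longrightarrow> A' \<inter> B' = {} \<Longrightarrow> 2 \<le> card A' \<Longrightarrow> 2 \<le> card B'
      \<Longrightarrow> crossing_pair E A' B'"
    using swc unfolding strongly_well_connected_iff by blast
  ultimately have "crossing_pair E ?A ?B"
    using part by simp
  then show "crossing_pair (map_prod f f ` E) A B"
    using crossing_pair_image[OF f] image by metis
qed

lemma hamilton_cycle_relabel:
  assumes "inj f"
  shows "hamilton_cycle (f ` V) (map_prod f f ` E) (map f ws) \<longleftrightarrow> hamilton_cycle V E ws"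
proof -
  have "(map f ws ! i, map f ws ! ((i + 1) mod length ws)) \<in> map_prod f f ` E
          \<longleftrightarrow> (ws ! i, ws ! ((i + 1) mod length ws)) \<in> E" if "i < length ws" for i
  proof -
    have "(i + 1) mod length ws < length ws"
      using that by (intro mod_less_divisor) linarith
    then show ?thesis
      using that assms by (metis map_prod_mem_iff nth_map)
  qed
  moreover have "inj_on f (set ws)"
    using assms by (rule inj_on_subset) simp
  ultimately show ?thesis
    unfolding hamilton_cycle_def length_map set_map distinct_map inj_image_eq_iff[OF assms]
    by auto
qed

lemma hamiltonian_relabel:
  assumes "inj f" "hamiltonian (f ` V) (map_prod f f ` E)"
  shows "hamiltonian V E"
proof -
  obtain vs where vs: "hamilton_cycle (f ` V) (map_prod f f ` E) vs"
    using assms(2) unfolding hamiltonian_def by blast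
  then have "vs = map f (map (inv f) vs)"
    unfolding hamilton_cycle_def map_map by (intro map_idI[symmetric]) (auto simp: f_inv_into_f)
  then show ?thesis
    using vs hamilton_cycle_relabel[OF assms(1)] unfolding hamiltonian_def by metis
qed

section \<open>Entering pieces along a Hamilton cycle\<close>

lemma cyclic_list_enters:
  assumes "i < length xs" "j < length xs" "P (xs ! i)" "\<not> P (xs ! j)"
  shows "\<exists>k<length xs. \<not> P (xs ! k) \<and> P (xs ! ((k + 1) mod length xs))"
proof (rule ccontr)
  define L where "L = length xs"
  assume "\<not> ?thesis"
  then have stay: "\<not> P (xs ! ((k + 1) mod L))" if "k < L" "\<not> P (xs ! k)" for k
    using that unfolding L_def by blast
  have "\<not> P (xs ! ((j + t) mod L))" for t
  proof (induction t)
    case 0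
    show ?case using assms(2,4) unfolding L_def by simp
  next
    case (Suc t)
    have "(j + t) mod L < L"
      using assms(1) unfolding L_def by (intro mod_less_divisor) linarith
    from stay[OF this Suc] show ?case
      by (simp add: mod_Suc_eq)
  qed
  from this[of "i + L - j"] show False
    using assms unfolding L_def by simp
qed

lemma hamilton_cycle_enters:
  assumes "hamilton_cycle V E vs" "x \<in> V" "x \<in> X" "y \<in> V" "y \<notin> X"
  shows "\<exists>k<length vs. vs ! k \<notin> X \<and> vs ! ((k + 1) mod length vs) \<in> X"
proof -
  have "set vs = V"
    using assms(1) unfolding hamilton_cycle_def by blast
  then obtain i j where "i < length vs" "vs ! i = x" "j < length vs" "vs ! j = y"
    using assms(2,4) by (metis in_set_conv_nth)
  then show ?thesis
    using cyclic_list_enters[of i vs j "\<lambda>v. v \<in> X"] assms(3,5) by blast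
qed

text \<open>Each piece is entered at least once along a Hamilton cycle, and distinct pieces are
  entered from distinct vertices of \<open>S\<close>.\<close>

lemma not_hamiltonian_if_few_entrances:
  assumes S: "finite S" "card S < card I"
    and pieces: "\<And>p. p \<in> I \<Longrightarrow> P p \<subseteq> V" "\<And>p. p \<in> I \<Longrightarrow> P p \<noteq> {}" "\<And>p. p \<in> I \<Longrightarrow> \<not> V \<subseteq> P p"
    and disjoint: "\<And>p q. p \<in> I \<Longrightarrow> q \<in> I \<Longrightarrow> p \<noteq> q \<Longrightarrow> P p \<inter> P q = {}"
    and entrances: "\<And>p x y. p \<in> I \<Longrightarrow> (x, y) \<in> E \<Longrightarrow> x \<notin> P p \<Longrightarrow> y \<in> P p \<Longrightarrow> x \<in> S"
  shows "\<not> hamiltonian V E"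
proof
  assume "hamiltonian V E"
  then obtain vs where hc: "hamilton_cycle V E vs"
    unfolding hamiltonian_def by blast
  then have vs: "distinct vs" "set vs = V"
    and step: "\<And>k. k < length vs \<Longrightarrow> (vs ! k, vs ! ((k + 1) mod length vs)) \<in> E"
    unfolding hamilton_cycle_def by auto
  let ?next = "\<lambda>k. (k + 1) mod length vs"
  have "\<forall>p\<in>I. \<exists>k. k < length vs \<and> vs ! k \<notin> P p \<and> vs ! ?next k \<in> P p"
  proof
    fix p assume p: "p \<in> I"
    then obtain x y where "x \<in> P p" "y \<in> V" "y \<notin> P p"
      using pieces by blast
    then show "\<exists>k. k < length vs \<and> vs ! k \<notin> P p \<and> vs ! ?next k \<in> P p"
      using hamilton_cycle_enters[OF hc] pieces(1)[OF p] by blast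
  qed
  then obtain k where k: "\<And>p. p \<in> I \<Longrightarrow> k p < length vs \<and> vs ! k p \<notin> P p \<and> vs ! ?next (k p) \<in> P p"
    by (rule bchoice[elim_format]) blast
  have "inj_on (\<lambda>p. vs ! k p) I"
  proof (rule inj_onI)
    fix p q assume p: "p \<in> I" and q: "q \<in> I" and "vs ! k p = vs ! k q"
    then have "k p = k q"
      using k[OF p] k[OF q] vs(1) by (simp add: nth_eq_iff_index_eq)
    then have "vs ! ?next (k p) \<in> P p \<inter> P q"
      using k[OF p] k[OF q] by simp
    then show "p = q"
      using disjoint[OF p q] by blast
  qed
  moreover have "vs ! k p \<in> S" if p: "p \<in> I" for p
    using entrances[OF p step] k[OF p] by blast
  ultimately have "card I \<le> card S"
    using card_inj_on_le[OF _ _ S(1)] by blast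
  then show False
    using S(2) by simp
qed

section \<open>Cuts in regular digraphs\<close>

definition adjacent :: "('a \<times> 'a) set \<Rightarrow> 'a \<Rightarrow> 'a \<Rightarrow> bool" where
  "adjacent E x y \<longleftrightarrow> (x, y) \<in> E \<or> (y, x) \<in> E"

lemma adjacent_commute: "adjacent E x y \<longleftrightarrow> adjacent E y x"
  unfolding adjacent_def by blast

definition cut_edges :: "('a \<times> 'a) set \<Rightarrow> 'a set \<Rightarrow> ('a \<times> 'a) set" where
  "cut_edges E A = {(x, y) \<in> E. x \<in> A \<longleftrightarrow> y \<notin> A}"

lemma finite_edges: "digraph V E \<Longrightarrow> finite E"
  unfolding digraph_def by (auto intro: finite_subset)

lemma card_edges_from:
  assumes "digraph V E" "A \<subseteq> V"
  shows "card {e \<in> E. fst e \<in> A} = (\<Sum>a\<in>A. outdeg E a)"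
proof -
  have "{e \<in> E. fst e \<in> A} = Sigma A (\<lambda>a. {w. (a, w) \<in> E})"
    by auto
  moreover have "finite {w. (a, w) \<in> E}" for a
    using assms(1) unfolding digraph_def by (auto intro: finite_subset)
  moreover have "finite A"
    using assms finite_subset unfolding digraph_def by blast
  ultimately show ?thesis
    unfolding outdeg_def by (simp add: card_SigmaI)
qed

lemma card_edges_into:
  assumes "digraph V E" "A \<subseteq> V"
  shows "card {e \<in> E. snd e \<in> A} = (\<Sum>a\<in>A. indeg E a)"
proof -
  have "{e \<in> E. snd e \<in> A} = prod.swap ` {e \<in> E\<inverse>. fst e \<in> A}"
    by force
  moreover have "digraph V (E\<inverse>)"
    using assms(1) unfolding digraph_def by auto
  moreover have "indeg E a = outdeg (E\<inverse>) a" for a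
    unfolding indeg_def outdeg_def by simp
  ultimately show ?thesis
    using card_edges_from[of V "E\<inverse>" A] assms(2) by (simp add: card_image)
qed

lemma regular_cut_balanced:
  assumes "digraph V E" "regular d V E" "A \<subseteq> V"
  shows "card {(x, y) \<in> E. x \<in> A \<and> y \<notin> A} = card {(x, y) \<in> E. x \<notin> A \<and> y \<in> A}"
proof -
  let ?inside = "{(x, y) \<in> E. x \<in> A \<and> y \<in> A}"
  have fin: "finite X" if "X \<subseteq> E" for X
    using finite_edges[OF assms(1)] that by (rule finite_subset[rotated])
  have "{e \<in> E. fst e \<in> A} = ?inside \<union> {(x, y) \<in> E. x \<in> A \<and> y \<notin> A}"
    by auto
  then have out: "card {e \<in> E. fst e \<in> A} = card ?inside + card {(x, y) \<in> E. x \<in> A \<and> y \<notin> A}"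
    by (auto intro!: card_Un_disjoint fin)
  have "{e \<in> E. snd e \<in> A} = ?inside \<union> {(x, y) \<in> E. x \<notin> A \<and> y \<in> A}"
    by auto
  then have into: "card {e \<in> E. snd e \<in> A} = card ?inside + card {(x, y) \<in> E. x \<notin> A \<and> y \<in> A}"
    by (auto intro!: card_Un_disjoint fin)
  have "(\<Sum>a\<in>A. outdeg E a) = (\<Sum>a\<in>A. indeg E a)"
    using assms(2,3) unfolding regular_def by (intro sum.cong) auto
  then have "card {e \<in> E. fst e \<in> A} = card {e \<in> E. snd e \<in> A}"
    using card_edges_from[OF assms(1,3)] card_edges_into[OF assms(1,3)] by simp
  then show ?thesis
    using out into by simp
qed

lemma card_ge_2_ex_neq:
  assumes "2 \<le> card X"
  shows "\<exists>y\<in>X. y \<noteq> z"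
proof (rule ccontr)
  assume "\<not> ?thesis"
  then have "card X \<le> card {z}"
    by (intro card_mono) auto
  then show False
    using assms by simp
qed

lemma pairwise_meeting_edges_common_vertex:
  assumes meet: "\<And>a b c d. (a, b) \<in> F \<Longrightarrow> (c, d) \<in> R \<Longrightarrow> a = d \<or> b = c"
    and F: "3 \<le> card F" and R: "2 \<le> card R"
  shows "\<exists>z. \<forall>e \<in> F \<union> R. fst e = z \<or> snd e = z"
proof -
  have meet': "fst f = snd r \<or> snd f = fst r" if "f \<in> F" "r \<in> R" for f r
    using meet[of "fst f" "snd f" "fst r" "snd r"] that by simp
  have "F \<noteq> {}" "R \<noteq> {}"
    using F R by auto
  then obtain a b r1 where ab: "(a, b) \<in> F" and r1: "r1 \<in> R"
    by auto
  then obtain r2 where r2: "r2 \<in> R" "r2 \<noteq> r1"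
    using card_ge_2_ex_neq[OF R] by blast
  consider "\<forall>r\<in>R. snd r = a" | "\<forall>r\<in>R. fst r = b"
    | r r' where "r \<in> R" "fst r \<noteq> b" "r' \<in> R" "snd r' \<noteq> a"
    by blast
  then show ?thesis
  proof cases
    case 1
    then have "\<forall>f\<in>F. fst f = a"
      using meet' r1 r2 by (metis prod_eqI)
    with 1 show ?thesis
      by blast
  next
    case 2
    then have "\<forall>f\<in>F. snd f = b"
      using meet' r1 r2 by (metis prod_eqI)
    with 2 show ?thesis
      by blast
  next
    case (3 r r')
    then have "snd r = a" "fst r' = b"
      using meet'[OF ab, of r] meet'[OF ab, of r'] by auto
    then have "f \<in> {(a, b), (snd r', fst r)}" if "f \<in> F" for f
      using meet'[OF that 3(1)] meet'[OF that 3(3)] 3 by (cases f) auto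
    then have "F \<subseteq> {(a, b), (snd r', fst r)}"
      by blast
    then have "card F \<le> card {(a, b), (snd r', fst r)}"
      by (intro card_mono) auto
    also have "\<dots> \<le> 2"
      by (simp add: card_insert_if)
    finally show ?thesis
      using F by simp
  qed
qed

text \<open>By regularity the cut has equally many edges in both directions, hence at least three each;
  without a crossing pair any two of them in opposite directions meet, so one vertex lies on all.\<close>

lemma regular_cut_crossing_pair:
  assumes "digraph V E" "regular d V E" and part: "A \<union> B = V" "A \<inter> B = {}"
    and large: "5 \<le> card (cut_edges E A)"
    and avoiding: "\<And>z. \<exists>x\<in>A. \<exists>y\<in>B. adjacent E x y \<and> x \<noteq> z \<and> y \<noteq> z"
  shows "crossing_pair E A B"
proof (rule ccontr)
  assume no_pair: "\<not> crossing_pair E A B"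
  let ?F = "{(x, y) \<in> E. x \<in> A \<and> y \<notin> A}" and ?R = "{(x, y) \<in> E. x \<notin> A \<and> y \<in> A}"
  have "cut_edges E A = ?F \<union> ?R"
    unfolding cut_edges_def by auto
  moreover have "finite ?F" "finite ?R"
    by (rule finite_subset[OF _ finite_edges[OF assms(1)]], blast)+
  ultimately have "card (cut_edges E A) = card ?F + card ?R"
    by (simp add: card_Un_disjoint disjoint_iff)
  moreover have "card ?F = card ?R"
    using regular_cut_balanced[OF assms(1,2), of A] part by blast
  ultimately have "3 \<le> card ?F" "2 \<le> card ?R"
    using large by linarith+
  moreover have "a = d \<or> b = c" if ab: "(a, b) \<in> ?F" and cd: "(c, d) \<in> ?R" for a b c d
  proof -
    have "b \<in> B" "c \<in> B"
      using ab cd assms(1) part unfolding digraph_def by auto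
    then show ?thesis
      using ab cd no_pair crossing_pairI[of a b E c d A B] part(2) by blast
  qed
  ultimately obtain z where z: "\<forall>e \<in> ?F \<union> ?R. fst e = z \<or> snd e = z"
    using pairwise_meeting_edges_common_vertex[of ?F ?R] by blast
  obtain x y where xy: "x \<in> A" "y \<in> B" "adjacent E x y" "x \<noteq> z" "y \<noteq> z"
    using avoiding by blast
  then have "y \<notin> A"
    using part(2) by blast
  then have "(x, y) \<in> ?F \<union> ?R \<or> (y, x) \<in> ?F \<union> ?R"
    using xy unfolding adjacent_def by blast
  then show False
    using z[rule_format, of "(x, y)"] z[rule_format, of "(y, x)"] xy(4,5) by auto
qed

lemma card_le_card_cut_edges:
  assumes "digraph V E" and crossing: "\<And>a b. (a, b) \<in> P \<Longrightarrow> adjacent E a b \<and> a \<in> A \<and> b \<notin> A"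
  shows "card P \<le> card (cut_edges E A)"
proof -
  define orient where "orient = (\<lambda>(a, b). if (a, b) \<in> E then (a, b) else (b, a))"
  have "orient e \<in> cut_edges E A" if "e \<in> P" for e
  proof -
    obtain a b where e: "e = (a, b)"
      by fastforce
    then have "(a, b) \<in> E \<or> (b, a) \<in> E" "a \<in> A" "b \<notin> A"
      using crossing that unfolding adjacent_def by auto
    then show ?thesis
      unfolding e orient_def cut_edges_def by auto
  qed
  moreover have "inj_on orient P"
  proof (rule inj_onI)
    fix e e' assume "e \<in> P" "e' \<in> P" "orient e = orient e'"
    then show "e = e'"
      using crossing unfolding orient_def by (cases e; cases e') (auto split: if_splits)
  qed
  moreover have "finite (cut_edges E A)"
    by (rule finite_subset[OF _ finite_edges[OF assms(1)]]) (auto simp: cut_edges_def)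
  ultimately show ?thesis
    by (intro card_inj_on_le) auto
qed

lemma five_plus_min_le_mult:
  fixes s t :: nat
  assumes "7 \<le> s + t" "1 \<le> s" "1 \<le> t"
  shows "5 + min s t \<le> s * t"
proof -
  have key: "5 + a \<le> a * b" if "a \<le> b" "7 \<le> a + b" "1 \<le> a" for a b :: nat
  proof (cases "a = 1")
    case True
    then show ?thesis
      using that by simp
  next
    case False
    have "a * 4 \<le> a * b"
      using that by simp
    then show ?thesis
      using False that by linarith
  qed
  show ?thesis
  proof (cases "s \<le> t")
    case True
    then show ?thesis
      using key[of s t] assms by (simp add: min_def)
  next
    case False
    then show ?thesis
      using key[of t s] assms by (simp add: min_def mult.commute)
  qed
qed

lemma card_pairs_off_matching:
  assumes fin: "finite S" "finite T" and size: "7 \<le> card S + card T" "S \<noteq> {}" "T \<noteq> {}"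
    and matching: "\<And>a b b'. R a b \<Longrightarrow> R a b' \<Longrightarrow> b = b'" "\<And>a a' b. R a b \<Longrightarrow> R a' b \<Longrightarrow> a = a'"
  shows "5 \<le> card {(a, b) \<in> S \<times> T. \<not> R a b}"
proof -
  let ?matched = "{(a, b) \<in> S \<times> T. R a b}" and ?others = "{(a, b) \<in> S \<times> T. \<not> R a b}"
  have "inj_on fst ?matched" "inj_on snd ?matched"
    using matching by (auto intro!: inj_onI)
  then have "card ?matched \<le> min (card S) (card T)"
    by (auto intro: card_inj_on_le[OF _ _ fin(1)] card_inj_on_le[OF _ _ fin(2)])
  moreover have "card ?matched + card ?others = card S * card T"
  proof -
    have "finite ?matched" "finite ?others"
      by (rule finite_subset[of _ "S \<times> T"]; use fin in auto)+
    then have "card (?matched \<union> ?others) = card ?matched + card ?others"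
      by (rule card_Un_disjoint) auto
    moreover have "?matched \<union> ?others = S \<times> T"
      by auto
    ultimately show ?thesis
      by (simp add: card_cartesian_product)
  qed
  moreover have "5 + min (card S) (card T) \<le> card S * card T"
    using size fin by (intro five_plus_min_le_mult) (auto simp: Suc_le_eq card_gt_0_iff)
  ultimately show ?thesis
    by linarith
qed

text \<open>The rotational tournament on \<open>\<int>/(2k+1)\<int>\<close>, with vertices \<open>0..2k\<close>: \<open>i \<rightarrow> j\<close> iff
  \<open>(j - i) mod (2k+1) \<in> {1..k}\<close>.\<close>

definition rotational :: "nat \<Rightarrow> nat \<Rightarrow> nat \<Rightarrow> bool" where
  "rotational k i j \<longleftrightarrow> i < j \<and> j \<le> i + k \<or> j + k < i"

lemma rotational_asym: "rotational k i j \<Longrightarrow> \<not> rotational k j i"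
  unfolding rotational_def by auto

lemma rotational_total: "i \<le> 2 * k \<Longrightarrow> j \<le> 2 * k \<Longrightarrow> i \<noteq> j \<Longrightarrow> rotational k i j \<or> rotational k j i"
  unfolding rotational_def by auto

lemma card_rotational_out:
  assumes "i \<le> 2 * k"
  shows "card {j. j \<le> 2 * k \<and> rotational k i j} = k"
proof (cases "i \<le> k")
  case True
  then have "{j. j \<le> 2 * k \<and> rotational k i j} = {i<..i + k}"
    unfolding rotational_def by auto
  then show ?thesis
    by simp
next
  case False
  then have "{j. j \<le> 2 * k \<and> rotational k i j} = {i<..2 * k} \<union> {..<i - k}"
    using assms unfolding rotational_def by auto
  moreover have "{i<..2 * k} \<inter> {..<i - k} = {}"
    by auto
  ultimately show ?thesis
    using assms False by (simp add: card_Un_disjoint)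
qed

lemma card_rotational_in:
  assumes "j \<le> 2 * k"
  shows "card {i. i \<le> 2 * k \<and> rotational k i j} = k"
proof (cases "k \<le> j")
  case True
  then have "{i. i \<le> 2 * k \<and> rotational k i j} = {j - k..<j}"
    using assms unfolding rotational_def by auto
  then show ?thesis
    using True by simp
next
  case False
  then have "{i. i \<le> 2 * k \<and> rotational k i j} = {..<j} \<union> {j + k<..2 * k}"
    unfolding rotational_def by auto
  moreover have "{..<j} \<inter> {j + k<..2 * k} = {}"
    by auto
  ultimately show ?thesis
    using False by (simp add: card_Un_disjoint)
qed

definition piece_edge :: "nat \<Rightarrow> nat \<Rightarrow> nat \<Rightarrow> bool" where
  "piece_edge n i j \<longleftrightarrow> i \<le> 6 * n \<and> j \<le> 6 * n \<and> rotational (3 * n) i j \<and> \<not> (i < 2 * n \<and> j = i + 3 * n)"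

lemma card_piece_out:
  assumes "i \<le> 6 * n"
  shows "card {j. piece_edge n i j} + (if i < 2 * n then 1 else 0) = 3 * n"
proof -
  let ?out = "{j. j \<le> 2 * (3 * n) \<and> rotational (3 * n) i j}"
  have "{j. piece_edge n i j} = ?out - (if i < 2 * n then {i + 3 * n} else {})"
    using assms unfolding piece_edge_def by auto
  moreover have "i + 3 * n \<in> ?out" if "i < 2 * n"
    using that unfolding rotational_def by simp
  ultimately show ?thesis
    using card_rotational_out[of i "3 * n"] assms by (simp add: card_Diff_singleton)
qed

lemma card_piece_in:
  assumes "j \<le> 6 * n"
  shows "card {i. piece_edge n i j} + (if 3 * n \<le> j \<and> j < 5 * n then 1 else 0) = 3 * n"
proof -
  let ?in = "{i. i \<le> 2 * (3 * n) \<and> rotational (3 * n) i j}"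
  have "{i. piece_edge n i j} = ?in - (if 3 * n \<le> j \<and> j < 5 * n then {j - 3 * n} else {})"
    using assms unfolding piece_edge_def by auto
  moreover have "j - 3 * n \<in> ?in" if "3 * n \<le> j" "j < 5 * n"
    using that unfolding rotational_def by simp
  ultimately show ?thesis
    using card_rotational_in[of j "3 * n"] assms by (simp add: card_Diff_singleton)
qed

text \<open>The graph: three pieces \<open>{p} \<times> {0..6n}\<close>, each a copy of the rotational tournament on
  \<open>6n+1\<close> vertices without the matching \<open>i \<rightarrow> i + 3n\<close> (\<open>i < 2n\<close>), and two hubs \<open>(3, 0)\<close> and
  \<open>(3, 1)\<close> restoring regularity: they receive the lost out-edges of \<open>i < n\<close> and \<open>n \<le> i < 2n\<close> and
  supply the lost in-edges of \<open>3n \<le> j < 4n\<close> and \<open>4n \<le> j < 5n\<close>, in all three pieces.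
  Every edge entering a piece comes from a hub.\<close>

definition graph_V :: "nat \<Rightarrow> (nat \<times> nat) set" where
  "graph_V n = {..<3} \<times> {..6 * n} \<union> {(3, 0), (3, 1)}"

definition graph_E :: "nat \<Rightarrow> ((nat \<times> nat) \<times> (nat \<times> nat)) set" where
  "graph_E n = {((p, i), (q, j)).
       p < 3 \<and> q = p \<and> piece_edge n i j
     \<or> p < 3 \<and> i < n \<and> (q, j) = (3, 0)
     \<or> (p, i) = (3, 0) \<and> q < 3 \<and> 3 * n \<le> j \<and> j < 4 * n
     \<or> p < 3 \<and> n \<le> i \<and> i < 2 * n \<and> (q, j) = (3, 1)
     \<or> (p, i) = (3, 1) \<and> q < 3 \<and> 4 * n \<le> j \<and> j < 5 * n}"

lemma card_graph_V: "card (graph_V n) = 18 * n + 5"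
proof -
  have "graph_V n = insert (3, 0) (insert (3, 1) ({..<3} \<times> {..6 * n}))"
    unfolding graph_V_def by auto
  then show ?thesis
    by (simp add: card_cartesian_product)
qed

lemma mem_graph_V: "(p, i) \<in> graph_V n \<longleftrightarrow> p < 3 \<and> i \<le> 6 * n \<or> p = 3 \<and> i \<le> 1"
  unfolding graph_V_def by auto

lemma graph_V_cases:
  assumes "v \<in> graph_V n"
  obtains p i where "v = (p, i)" "p < 3" "i \<le> 6 * n" | "v = (3, 0)" | "v = (3, 1)"
  using assms unfolding graph_V_def by auto

lemma digraph_graph: "digraph (graph_V n) (graph_E n)"
proof -
  have "x \<in> graph_V n \<and> y \<in> graph_V n" if "(x, y) \<in> graph_E n" for x y
    using that unfolding graph_E_def piece_edge_def by (cases x; cases y) (auto simp: mem_graph_V)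
  moreover have "finite (graph_V n)"
    by (simp add: graph_V_def)
  ultimately show ?thesis
    unfolding digraph_def by auto
qed

lemma oriented_graph: "oriented (graph_V n) (graph_E n)"
  unfolding oriented_def
proof (intro conjI allI impI digraph_graph)
  fix x :: "nat \<times> nat"
  show "(x, x) \<notin> graph_E n"
    by (cases x) (auto simp: graph_E_def piece_edge_def rotational_def)
next
  fix x y :: "nat \<times> nat"
  assume "(x, y) \<in> graph_E n"
  then show "(y, x) \<notin> graph_E n"
    by (cases x; cases y) (auto simp: graph_E_def piece_edge_def dest: rotational_asym)
qed

lemma finite_piece_edges: "finite {j. piece_edge n i j}" "finite {i. piece_edge n i j}"
  by (rule finite_subset[of _ "{..6 * n}"]; auto simp: piece_edge_def)+

lemma out_neighbours_piece:
  assumes "p < 3"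
  shows "{w. ((p, i), w) \<in> graph_E n}
    = Pair p ` {j. piece_edge n i j} \<union> (if i < n then {(3, 0)} else if i < 2 * n then {(3, 1)} else {})"
  using assms unfolding graph_E_def by auto

lemma in_neighbours_piece:
  assumes "p < 3"
  shows "{w. (w, (p, j)) \<in> graph_E n}
    = Pair p ` {i. piece_edge n i j}
      \<union> (if 3 * n \<le> j \<and> j < 4 * n then {(3, 0)} else if 4 * n \<le> j \<and> j < 5 * n then {(3, 1)} else {})"
  using assms unfolding graph_E_def by auto

lemma regular_graph: "regular (3 * n) (graph_V n) (graph_E n)"
  unfolding regular_def
proof
  fix v assume "v \<in> graph_V n"
  then show "indeg (graph_E n) v = 3 * n \<and> outdeg (graph_E n) v = 3 * n"
  proof (cases rule: graph_V_cases)
    case (1 p i)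
    have card_Pair: "card (Pair p ` X) = card X" for X :: "nat set"
      by (simp add: card_image inj_on_def)
    have "outdeg (graph_E n) v = card {j. piece_edge n i j} + (if i < 2 * n then 1 else 0)"
      unfolding outdeg_def 1 out_neighbours_piece[OF 1(2)]
      using 1(2) by (subst card_Un_disjoint) (auto simp: card_Pair finite_piece_edges)
    moreover have "indeg (graph_E n) v
        = card {j. piece_edge n j i} + (if 3 * n \<le> i \<and> i < 5 * n then 1 else 0)"
      unfolding indeg_def 1 in_neighbours_piece[OF 1(2)]
      using 1(2) by (subst card_Un_disjoint) (auto simp: card_Pair finite_piece_edges)
    ultimately show ?thesis
      using card_piece_out[OF 1(3)] card_piece_in[OF 1(3)] by simp
  next
    case 2
    have "{w. (v, w) \<in> graph_E n} = {..<3} \<times> {3 * n..<4 * n}"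
      and "{w. (w, v) \<in> graph_E n} = {..<3} \<times> {..<n}"
      unfolding 2 graph_E_def by auto
    then show ?thesis
      unfolding indeg_def outdeg_def by (simp add: card_cartesian_product)
  next
    case 3
    have "{w. (v, w) \<in> graph_E n} = {..<3} \<times> {4 * n..<5 * n}"
      and "{w. (w, v) \<in> graph_E n} = {..<3} \<times> {n..<2 * n}"
      unfolding 3 graph_E_def by auto
    then show ?thesis
      unfolding indeg_def outdeg_def by (simp add: card_cartesian_product)
  qed
qed

lemma not_hamiltonian_graph: "\<not> hamiltonian (graph_V n) (graph_E n)"
proof (rule not_hamiltonian_if_few_entrances[where S = "{(3, 0), (3, 1)}" and I = "{..<3}"
      and P = "\<lambda>p. {p} \<times> {..6 * n}"])
  show "card {(3::nat, 0::nat), (3, 1)} < card {..<3::nat}"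
    by simp
  fix p x y assume "p \<in> {..<3::nat}" "(x, y) \<in> graph_E n" "x \<notin> {p} \<times> {..6 * n}" "y \<in> {p} \<times> {..6 * n}"
  then show "x \<in> {(3, 0), (3, 1)}"
    unfolding graph_E_def piece_edge_def by auto
qed (auto simp: graph_V_def)

section \<open>Strong well-connectedness of the construction\<close>

definition partner :: "nat \<Rightarrow> nat \<Rightarrow> nat \<Rightarrow> bool" where
  "partner n i j \<longleftrightarrow> i < 2 * n \<and> j = i + 3 * n \<or> j < 2 * n \<and> i = j + 3 * n"

lemma partner_unique: "partner n i j \<Longrightarrow> partner n i k \<Longrightarrow> j = k"
  unfolding partner_def by auto

lemma partner_unique': "partner n i j \<Longrightarrow> partner n k j \<Longrightarrow> i = k"
  unfolding partner_def by auto

lemma adjacent_in_piece: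
  assumes "p < 3" "i \<le> 6 * n" "j \<le> 6 * n" "i \<noteq> j" "\<not> partner n i j"
  shows "adjacent (graph_E n) (p, i) (p, j)"
  using rotational_total[of i "3 * n" j] assms
  unfolding adjacent_def graph_E_def piece_edge_def partner_def by auto

lemma adjacent_hubs:
  assumes "1 \<le> n" "p < 3"
  shows "adjacent (graph_E n) (3, 0) (p, 0)" "adjacent (graph_E n) (3, 0) (p, 3 * n)"
    and "adjacent (graph_E n) (3, 1) (p, n)" "adjacent (graph_E n) (3, 1) (p, 4 * n)"
  using assms unfolding adjacent_def graph_E_def by auto

text \<open>If the two vertices are partners, a third vertex \<open>w < 4\<close> of the piece avoiding \<open>z\<close> is
  adjacent to both, and one of these two adjacencies crosses the cut.\<close>

lemma split_piece_adjacent_avoiding: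
  assumes n: "1 \<le> n" and part: "A \<union> B = graph_V n" "A \<inter> B = {}"
    and q: "q < 3" "i \<le> 6 * n" "j \<le> 6 * n" and split: "(q, i) \<in> A" "(q, j) \<in> B"
    and z: "z \<noteq> (q, i)" "z \<noteq> (q, j)"
  shows "\<exists>x\<in>A. \<exists>y\<in>B. adjacent (graph_E n) x y \<and> x \<noteq> z \<and> y \<noteq> z"
proof (cases "partner n i j")
  case False
  have "i \<noteq> j"
    using split part(2) by blast
  then show ?thesis
    using adjacent_in_piece[OF q _ False] split z by blast
next
  case True
  have "card {i, j, snd z} < card {..<4::nat}"
    by (auto simp: card_insert_if)
  then have "\<not> {..<4} \<subseteq> {i, j, snd z}"
    by (meson card_mono finite.emptyI finite.insertI leD)
  then obtain w where w: "w < 4" "w \<noteq> i" "w \<noteq> j" "w \<noteq> snd z"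
    by auto
  have "(q, w) \<in> graph_V n"
    using w(1) q(1) n by (simp add: mem_graph_V)
  moreover have "adjacent (graph_E n) (q, i) (q, w)" "adjacent (graph_E n) (q, w) (q, j)"
  proof -
    have "w \<le> 6 * n"
      using w(1) n by linarith
    moreover have "\<not> partner n i w" "\<not> partner n w j"
      using partner_unique[OF True] partner_unique'[OF True] w(2,3) by metis+
    ultimately show "adjacent (graph_E n) (q, i) (q, w)" "adjacent (graph_E n) (q, w) (q, j)"
      using adjacent_in_piece[OF q(1)] q w(2,3) by (metis not_sym)+
  qed
  moreover have "(q, w) \<noteq> z"
    using w(4) by auto
  ultimately show ?thesis
    using part split z by blast
qed

lemma hub_adjacent_avoiding:
  assumes n: "1 \<le> n" and p: "p < 3" and hub: "h = (3, 0) \<or> h = (3, 1)"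
    and rest: "\<And>j. j \<le> 6 * n \<Longrightarrow> j \<noteq> i \<Longrightarrow> (p, j) \<in> B"
  shows "\<exists>y\<in>B. adjacent (graph_E n) h y \<and> y \<noteq> (p, i)"
proof -
  obtain a b where ab: "a \<noteq> b" "a \<le> 6 * n" "b \<le> 6 * n"
    and adj: "adjacent (graph_E n) h (p, a)" "adjacent (graph_E n) h (p, b)"
    using hub
  proof
    assume "h = (3, 0)"
    then show thesis
      using that[of 0 "3 * n"] adjacent_hubs(1,2)[OF n p] n by simp
  next
    assume "h = (3, 1)"
    then show thesis
      using that[of n "4 * n"] adjacent_hubs(3,4)[OF n p] n by simp
  qed
  then consider "a \<noteq> i" | "b \<noteq> i"
    by blast
  then show ?thesis
    by cases (use ab adj rest in auto)
qed

text \<open>Both hubs have a neighbour in \<open>B\<close> in the piece of \<open>(p, i)\<close>; so it suffices to find a hub in \<open>A\<close>,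
  another split piece, or a piece inside \<open>A\<close>, whose vertex \<open>(q, 0)\<close> is adjacent to the hub \<open>(3, 0)\<close>.\<close>

lemma lone_vertex_adjacent_avoiding:
  assumes n: "1 \<le> n" and part: "A \<union> B = graph_V n" "A \<inter> B = {}" and A: "2 \<le> card A"
    and p: "p < 3" "(p, i) \<in> A" and rest: "\<And>j. j \<le> 6 * n \<Longrightarrow> j \<noteq> i \<Longrightarrow> (p, j) \<in> B"
  shows "\<exists>x\<in>A. \<exists>y\<in>B. adjacent (graph_E n) x y \<and> x \<noteq> (p, i) \<and> y \<noteq> (p, i)"
proof -
  note hub = hub_adjacent_avoiding[OF n p(1) _ rest]
  obtain y where y: "y \<in> A" "y \<noteq> (p, i)"
    using card_ge_2_ex_neq[OF A] by blast
  then have "y \<in> graph_V n"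
    using part(1) by blast
  then show ?thesis
  proof (cases rule: graph_V_cases)
    case (1 q k)
    have "q \<noteq> p"
      using y 1 rest part(2) by blast
    show ?thesis
    proof (cases "\<exists>k'\<le>6 * n. (q, k') \<in> B")
      case True
      then obtain k' where "k' \<le> 6 * n" "(q, k') \<in> B"
        by blast
      then show ?thesis
        using split_piece_adjacent_avoiding[OF n part 1(2,3) _ _ _ , of k' "(p, i)"] y 1 \<open>q \<noteq> p\<close>
        by blast
    next
      case False
      then have "(q, 0) \<in> A"
        using part 1(2) by (auto simp: mem_graph_V)
      moreover have "adjacent (graph_E n) (q, 0) (3, 0)"
        using adjacent_hubs(1)[OF n 1(2)] adjacent_commute by metis
      moreover have "(3, 0) \<in> A \<or> (3, 0) \<in> B"
        using part(1) mem_graph_V[of 3 0 n] by blast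
      moreover have "(q, 0) \<noteq> (p, i)" "(3, 0) \<noteq> (p, i)"
        using \<open>q \<noteq> p\<close> p(1) by auto
      ultimately show ?thesis
        using hub[of "(3, 0)"] by blast
    qed
  qed (use y hub in blast)+
qed

lemma split_piece_adjacent_avoiding_endpoint:
  assumes n: "1 \<le> n" and part: "A \<union> B = graph_V n" "A \<inter> B = {}" and A: "2 \<le> card A"
    and p: "p < 3" "i \<le> 6 * n" "j \<le> 6 * n" and split: "(p, i) \<in> A" "(p, j) \<in> B"
  shows "\<exists>x\<in>A. \<exists>y\<in>B. adjacent (graph_E n) x y \<and> x \<noteq> (p, i) \<and> y \<noteq> (p, i)"
proof (cases "\<exists>i'\<le>6 * n. i' \<noteq> i \<and> (p, i') \<in> A")
  case True
  then obtain i' where i': "i' \<le> 6 * n" "i' \<noteq> i" "(p, i') \<in> A"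
    by blast
  moreover have "(p, i) \<noteq> (p, i')" "(p, i) \<noteq> (p, j)"
    using \<open>i' \<noteq> i\<close> split part(2) by auto
  ultimately show ?thesis
    by (intro split_piece_adjacent_avoiding[OF n part p(1) i'(1) p(3) i'(3) split(2)])
next
  case False
  have "(p, i') \<in> B" if "i' \<le> 6 * n" "i' \<noteq> i" for i'
  proof -
    have "(p, i') \<in> graph_V n"
      using that p(1) by (simp add: mem_graph_V)
    then show ?thesis
      using False that part(1) by blast
  qed
  then show ?thesis
    by (rule lone_vertex_adjacent_avoiding[OF n part A p(1) split(1)])
qed

lemma split_piece_adjacent_avoiding_any:
  assumes n: "1 \<le> n" and part: "A \<union> B = graph_V n" "A \<inter> B = {}"
    and large: "2 \<le> card A" "2 \<le> card B"
    and p: "p < 3" "i \<le> 6 * n" "j \<le> 6 * n" and split: "(p, i) \<in> A" "(p, j) \<in> B"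
  shows "\<exists>x\<in>A. \<exists>y\<in>B. adjacent (graph_E n) x y \<and> x \<noteq> z \<and> y \<noteq> z"
proof -
  consider "z \<noteq> (p, i)" "z \<noteq> (p, j)" | "z = (p, i)" | "z = (p, j)"
    by blast
  then show ?thesis
  proof cases
    case 1
    then show ?thesis
      by (rule split_piece_adjacent_avoiding[OF n part p split])
  next
    case 2
    then show ?thesis
      using split_piece_adjacent_avoiding_endpoint[OF n part large(1) p split] by simp
  next
    case 3
    have part': "B \<union> A = graph_V n" "B \<inter> A = {}"
      using part by auto
    obtain y x where "y \<in> B" "x \<in> A" "adjacent (graph_E n) y x" "y \<noteq> z" "x \<noteq> z"
      using split_piece_adjacent_avoiding_endpoint[OF n part' large(2) p(1,3,2) split(2,1)] 3 by blast
    then show ?thesis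
      using adjacent_commute[of "graph_E n" y x] by blast
  qed
qed

lemma card_split_piece_pairs:
  assumes n: "1 \<le> n" and part: "A \<union> B = graph_V n" "A \<inter> B = {}"
    and p: "p < 3" "i \<le> 6 * n" "j \<le> 6 * n" and split: "(p, i) \<in> A" "(p, j) \<in> B"
  shows "5 \<le> card {(a, b). a \<le> 6 * n \<and> b \<le> 6 * n \<and> (p, a) \<in> A \<and> (p, b) \<in> B \<and> \<not> partner n a b}"
proof -
  define S where "S = {k. k \<le> 6 * n \<and> (p, k) \<in> A}"
  define T where "T = {k. k \<le> 6 * n \<and> (p, k) \<in> B}"
  have fin: "finite S" "finite T"
    unfolding S_def T_def by auto
  have "(p, k) \<in> A \<union> B" if "k \<le> 6 * n" for k
    using that p(1) part(1) by (simp add: mem_graph_V)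
  then have "S \<union> T = {..6 * n}"
    unfolding S_def T_def by auto
  moreover have "S \<inter> T = {}"
    using part(2) unfolding S_def T_def by auto
  ultimately have "card S + card T = 6 * n + 1"
    using card_Un_disjoint[OF fin] by simp
  moreover have "S \<noteq> {}" "T \<noteq> {}"
    using split p(2,3) unfolding S_def T_def by auto
  ultimately have "5 \<le> card {(a, b) \<in> S \<times> T. \<not> partner n a b}"
    using n fin by (intro card_pairs_off_matching) (auto dest: partner_unique partner_unique')
  also have "{(a, b) \<in> S \<times> T. \<not> partner n a b}
      = {(a, b). a \<le> 6 * n \<and> b \<le> 6 * n \<and> (p, a) \<in> A \<and> (p, b) \<in> B \<and> \<not> partner n a b}"
    unfolding S_def T_def by auto
  finally show ?thesis .
qed

lemma card_cut_edges_split_piece: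
  assumes n: "1 \<le> n" and part: "A \<union> B = graph_V n" "A \<inter> B = {}"
    and p: "p < 3" "i \<le> 6 * n" "j \<le> 6 * n" and split: "(p, i) \<in> A" "(p, j) \<in> B"
  shows "5 \<le> card (cut_edges (graph_E n) A)"
proof -
  let ?pairs = "{(a, b). a \<le> 6 * n \<and> b \<le> 6 * n \<and> (p, a) \<in> A \<and> (p, b) \<in> B \<and> \<not> partner n a b}"
  let ?P = "(\<lambda>(a, b). ((p, a), (p, b))) ` ?pairs"
  have "card ?P = card ?pairs"
    by (rule card_image) (auto simp: inj_on_def)
  moreover have "card ?P \<le> card (cut_edges (graph_E n) A)"
  proof (rule card_le_card_cut_edges[OF digraph_graph])
    fix x y assume "(x, y) \<in> ?P"
    then obtain a b where xy: "x = (p, a)" "y = (p, b)" and ab: "a \<le> 6 * n" "b \<le> 6 * n"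
      and sides: "(p, a) \<in> A" "(p, b) \<in> B" and "\<not> partner n a b"
      by force
    moreover have "a \<noteq> b" "(p, b) \<notin> A"
      using sides part(2) by auto
    ultimately show "adjacent (graph_E n) x y \<and> x \<in> A \<and> y \<notin> A"
      using adjacent_in_piece[OF p(1) ab] by simp
  qed
  ultimately show ?thesis
    using card_split_piece_pairs[OF n part p split] by linarith
qed

lemma piece_vertex_of_side:
  assumes "2 \<le> card X" "X \<subseteq> graph_V n" and hub: "(3, 0) \<notin> X \<or> (3, 1) \<notin> X"
  obtains q k where "(q, k) \<in> X" "q < 3" "k \<le> 6 * n"
proof -
  obtain y where "y \<in> X" "y \<noteq> (3, 0)" "y \<noteq> (3, 1)"
    using hub card_ge_2_ex_neq[OF assms(1)] by metis
  moreover have "y \<in> graph_V n"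
    using \<open>y \<in> X\<close> assms(2) by blast
  ultimately show thesis
    using that by (metis graph_V_cases)
qed

lemma no_split_same_side:
  assumes part: "A \<union> B = graph_V n" "A \<inter> B = {}"
    and no_split: "\<not> (\<exists>p i j. p < 3 \<and> i \<le> 6 * n \<and> j \<le> 6 * n \<and> (p, i) \<in> A \<and> (p, j) \<in> B)"
    and p: "p < 3" "i \<le> 6 * n" "j \<le> 6 * n"
  shows "(p, j) \<in> A \<longleftrightarrow> (p, i) \<in> A" "(p, j) \<in> B \<longleftrightarrow> (p, i) \<in> B"
proof -
  have "(p, i) \<in> A \<union> B" "(p, j) \<in> A \<union> B"
    using p part(1) by (simp_all add: mem_graph_V)
  moreover have "\<not> ((p, i) \<in> A \<and> (p, j) \<in> B)" "\<not> ((p, j) \<in> A \<and> (p, i) \<in> B)"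
    using no_split p by blast+
  ultimately show "(p, j) \<in> A \<longleftrightarrow> (p, i) \<in> A" "(p, j) \<in> B \<longleftrightarrow> (p, i) \<in> B"
    using part(2) by blast+
qed

lemma unsplit_crossing_pair_hub:
  assumes n: "1 \<le> n" and part: "A \<union> B = graph_V n" "A \<inter> B = {}"
    and large: "2 \<le> card A" "2 \<le> card B"
    and no_split: "\<not> (\<exists>p i j. p < 3 \<and> i \<le> 6 * n \<and> j \<le> 6 * n \<and> (p, i) \<in> A \<and> (p, j) \<in> B)"
    and hub: "(3, 0) \<in> A"
  shows "crossing_pair (graph_E n) A B"
proof -
  note same_side = no_split_same_side[OF part no_split]
  obtain q k where "(q, k) \<in> B" "q < 3" "k \<le> 6 * n"
    using piece_vertex_of_side[OF large(2), of n] hub part by blast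
  then have qB: "(q, 3 * n) \<in> B" "(q, n) \<in> B"
    using same_side(2)[of q k "3 * n"] same_side(2)[of q k n] by simp_all
  have e1: "((3, 0), (q, 3 * n)) \<in> graph_E n"
    using n \<open>q < 3\<close> unfolding graph_E_def by simp
  show ?thesis
  proof (cases "(3, 1) \<in> A")
    case True
    have "((q, n), (3, 1)) \<in> graph_E n"
      using n \<open>q < 3\<close> unfolding graph_E_def by simp
    then show ?thesis
      using crossing_pairI[OF e1 _ hub True qB(1) qB(2) part(2)] n by simp
  next
    case False
    then have v: "(3, 1) \<in> B"
      using part(1) mem_graph_V[of 3 1 n] by blast
    obtain p k' where "(p, k') \<in> A" "p < 3" "k' \<le> 6 * n"
      using piece_vertex_of_side[OF large(1), of n] False part by blast
    then have "(p, 4 * n) \<in> A"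
      using same_side(1)[of p k' "4 * n"] by simp
    moreover have "((3, 1), (p, 4 * n)) \<in> graph_E n"
      using n \<open>p < 3\<close> unfolding graph_E_def by simp
    ultimately show ?thesis
      using \<open>p < 3\<close> by (intro crossing_pairI[OF e1 _ hub _ qB(1) v part(2)]) auto
  qed
qed

lemma unsplit_crossing_pair:
  assumes n: "1 \<le> n" and part: "A \<union> B = graph_V n" "A \<inter> B = {}"
    and large: "2 \<le> card A" "2 \<le> card B"
    and no_split: "\<not> (\<exists>p i j. p < 3 \<and> i \<le> 6 * n \<and> j \<le> 6 * n \<and> (p, i) \<in> A \<and> (p, j) \<in> B)"
  shows "crossing_pair (graph_E n) A B"
proof -
  have "(3, 0) \<in> A \<union> B"
    using part(1) mem_graph_V[of 3 0 n] by blast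
  then show ?thesis
  proof
    assume "(3, 0) \<in> A"
    with no_split show ?thesis
      by (rule unsplit_crossing_pair_hub[OF n part large])
  next
    assume "(3, 0) \<in> B"
    moreover have "B \<union> A = graph_V n" "B \<inter> A = {}"
      using part by auto
    moreover have "\<not> (\<exists>p i j. p < 3 \<and> i \<le> 6 * n \<and> j \<le> 6 * n \<and> (p, i) \<in> B \<and> (p, j) \<in> A)"
      using no_split by blast
    ultimately have "crossing_pair (graph_E n) B A"
      by (intro unsplit_crossing_pair_hub[OF n _ _ large(2,1)])
    then show ?thesis
      by (rule crossing_pair_sym)
  qed
qed

lemma strongly_well_connected_graph:
  assumes n: "1 \<le> n"
  shows "strongly_well_connected (graph_V n) (graph_E n)"
  unfolding strongly_well_connected_iff
proof (intro conjI allI impI)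
  show "4 \<le> card (graph_V n)"
    by (simp add: card_graph_V)
  fix A B assume "A \<union> B = graph_V n \<and> A \<inter> B = {} \<and> 2 \<le> card A \<and> 2 \<le> card B"
  then have part: "A \<union> B = graph_V n" "A \<inter> B = {}" and large: "2 \<le> card A" "2 \<le> card B"
    by auto
  show "crossing_pair (graph_E n) A B"
  proof (cases "\<exists>p i j. p < 3 \<and> i \<le> 6 * n \<and> j \<le> 6 * n \<and> (p, i) \<in> A \<and> (p, j) \<in> B")
    case True
    then obtain p i j where p: "p < 3" "i \<le> 6 * n" "j \<le> 6 * n" and split: "(p, i) \<in> A" "(p, j) \<in> B"
      by blast
    show ?thesis
      by (rule regular_cut_crossing_pair[OF digraph_graph regular_graph part
            card_cut_edges_split_piece[OF n part p split]])
        (rule split_piece_adjacent_avoiding_any[OF n part large p split])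
  next
    case False
    then show ?thesis
      by (rule unsplit_crossing_pair[OF n part large])
  qed
qed

theorem proposition7p1:
  fixes n :: nat
  assumes "n \<ge> 1"
  shows "\<exists>(V :: nat set) (E :: (nat \<times> nat) set).
           oriented V E \<and> card V = 18 * n + 5 \<and> regular (3 * n) V E \<and>
           strongly_well_connected V E \<and> \<not> hamiltonian V E"
proof -
  let ?V = "prod_encode ` graph_V n" and ?E = "map_prod prod_encode prod_encode ` graph_E n"
  have inj: "inj prod_encode"
    by (rule inj_prod_encode)
  have "oriented ?V ?E"
    by (rule oriented_relabel[OF inj oriented_graph])
  moreover have "card ?V = 18 * n + 5"
    using card_image[OF inj_prod_encode] card_graph_V by simp
  moreover have "regular (3 * n) ?V ?E"
    by (rule regular_relabel[OF inj regular_graph])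
  moreover have "strongly_well_connected ?V ?E"
    by (rule strongly_well_connected_relabel[OF inj strongly_well_connected_graph[OF assms]])
  moreover have "\<not> hamiltonian ?V ?E"
    using hamiltonian_relabel[OF inj] not_hamiltonian_graph by blast
  ultimately show ?thesis
    by blast
qed

end
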